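(* There exists a positive integer $d_0$ such that the following holds for all $d \geq d_0$. Let $0 < \epsilon \leq \frac{5}{8}$, and let $2^{18} \leq d' \leq d$. Let $n$ be a positive even integer, and let $H = (X \cup Y, E)$ be a balanced bipartite graph on $[n]$ with parts $X,Y$ satisfying $\frac{d}{2}-d^{2/3}\leq\deg_H(v) \leq \frac{d}{2} + d^{2/3}$ for every $v \in [n]$. Let $G_X$ be a graph on $X$ satisfying $(1-\epsilon)d'\leq\deg_{G_X}(x) \leq (1 + \epsilon)d'$ for every $x \in X$. Then there exists a bipartition $\{X', X''\}$ of $X$ such that: (L1) the graph $H_X := G_X[X', X'']$ satisfies $$\left(1 - \frac{2}{(d')^{1/3}}\right)\frac{\deg_{G_X}(x)}{2}\leq\deg_{H_X}(x) \leq \left(1 + \frac{2}{(d')^{1/3}}\right)\frac{\deg_{G_X}(x)}{2}$$ for every $x \in X$; (L2) $\{X', X''\}$ is $\frac{d}{5}$-good with respect to $H$.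
   Context: A balanced bipartite graph $H=(X\cup Y,E)$ is a bipartite graph with parts $X,Y$, $|X|=|Y|$. For disjoint sets $X',X''$, $G_X[X',X'']$ denotes the bipartite subgraph (on vertex set $X'\cup X''$) of all edges of $G_X$ with one endpoint in $X'$ and the other in $X''$. Definition ($d$-good bipartition): let $H=(X\cup Y,E)$ be a balanced bipartite graph on $[n]$ and $d>0$. A bipartition $\{X',X''\}$ of $X$ is $d$-good with respect to $H$ if (G1) $\big||X'|-|X''|\big|\leq 1$, and (G2) $|N_H(y)\cap X'|\geq d$ and $|N_H(y)\cap X''|\geq d$ for every $y\in Y$. A $d$-good bipartition of $Y$ with respect to $H$ is defined analogously with the roles of $X$ and $Y$ swapped. *)

theory Defs
  imports Complex_Main
begin

definition simple_graph_on :: "nat set \<Rightarrow> (nat \<Rightarrow> nat \<Rightarrow> bool) \<Rightarrow> bool" where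
  "simple_graph_on V E \<longleftrightarrow> finite V \<and> (\<forall>u v. E u v \<longrightarrow> E v u) \<and> (\<forall>u. \<not> E u u)
     \<and> (\<forall>u v. E u v \<longrightarrow> u \<in> V \<and> v \<in> V)"

definition nbhd :: "(nat \<Rightarrow> nat \<Rightarrow> bool) \<Rightarrow> nat \<Rightarrow> nat set" where
  "nbhd E v = {u. E v u}"

definition deg :: "(nat \<Rightarrow> nat \<Rightarrow> bool) \<Rightarrow> nat \<Rightarrow> nat" where
  "deg E v = card (nbhd E v)"

definition balanced_bipartite_on :: "nat \<Rightarrow> nat set \<Rightarrow> nat set \<Rightarrow> (nat \<Rightarrow> nat \<Rightarrow> bool) \<Rightarrow> bool" where
  "balanced_bipartite_on n X Y E \<longleftrightarrow> simple_graph_on {1..n} E \<and> X \<union> Y = {1..n} \<and> X \<inter> Y = {}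
     \<and> card X = card Y \<and> (\<forall>u v. E u v \<longrightarrow> (u \<in> X \<and> v \<in> Y) \<or> (u \<in> Y \<and> v \<in> X))"

definition bip_sub :: "(nat \<Rightarrow> nat \<Rightarrow> bool) \<Rightarrow> nat set \<Rightarrow> nat set \<Rightarrow> nat \<Rightarrow> nat \<Rightarrow> bool" where
  "bip_sub E A B = (\<lambda>u v. E u v \<and> ((u \<in> A \<and> v \<in> B) \<or> (u \<in> B \<and> v \<in> A)))"

definition d_good :: "real \<Rightarrow> nat set \<Rightarrow> (nat \<Rightarrow> nat \<Rightarrow> bool) \<Rightarrow> nat set \<Rightarrow> nat set \<Rightarrow> bool" where
  "d_good d Y H X' X'' \<longleftrightarrow>
     \<bar>int (card X') - int (card X'')\<bar> \<le> 1 \<and>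
     (\<forall>y \<in> Y. real (card (nbhd H y \<inter> X')) \<ge> d \<and> real (card (nbhd H y \<inter> X'')) \<ge> d)"

end

theory Submission
  imports Defs "HOL-Probability.Hoeffding"
begin

text \<open>Enumerate \<open>X\<close> and pair up consecutive vertices; one fair coin per pair decides which
  member of the pair goes to \<open>X'\<close> and which to \<open>X''\<close>.  Then \<open>|X'|\<close> and \<open>|X''|\<close> differ by at
  most one, and for every vertex \<open>v\<close> the difference \<open>|N(v) \<inter> X'| - |N(v) \<inter> X''|\<close> is a sum of
  independent terms in \<open>{-1, 0, 1}\<close>, one per pair met by \<open>N(v)\<close>.  By Hoeffding's inequality it
  is unlikely to exceed \<open>(2 / q) deg\<^sub>G\<^sub>X(x)\<close> for \<open>x \<in> X\<close>, where \<open>q = d'\<^sup>1\<^sup>/\<^sup>3\<close>, or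
  \<open>deg\<^sub>H(y) - 2d/5\<close> for \<open>y \<in> Y\<close>.  Two of these bad events are independent unless the two
  neighbourhoods meet a common pair, so each depends on \<open>O(q\<^sup>6 + q\<^sup>3 d)\<close> or
  \<open>O(d q\<^sup>3 + d\<^sup>2)\<close> others, and the Lov\'asz Local Lemma with weights \<open>4 e\<^sup>-\<^sup>3\<^sup>q\<^sup>/\<^sup>4\<close>
  and \<open>e\<^sup>-\<^sup>d\<^sup>/\<^sup>5\<^sup>0\<^sup>0\<close> shows that with positive probability none of them occurs.\<close>

lemma cosh_le_exp_half_square:
  fixes a :: real
  shows "cosh a \<le> exp (a\<^sup>2 / 2)"
proof -
  have nonneg: "cosh a \<le> exp (a\<^sup>2 / 2)" if "a \<ge> 0" for a :: real
  proof -
    \<comment> \<open>Hoeffding's lemma for a fair coin taking the values \<open>0\<close> and \<open>2 a\<close>\<close>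
    have "ln (1 + (exp (2*a) - 1) / 2) \<le> a\<^sup>2 / 2 + a"
      using Hoeffdings_lemma_aux[of "2*a" "1/2"] that by (simp add: power2_eq_square)
    moreover have "0 < 1 + (exp (2*a) - 1) / 2"
      using exp_gt_zero[of "2*a"] by (simp add: field_simps add_pos_pos)
    ultimately have "1 + (exp (2*a) - 1) / 2 \<le> exp (a\<^sup>2 / 2 + a)"
      by (metis exp_le_cancel_iff exp_ln)
    then have "(1 + exp (2*a)) / 2 \<le> exp (a\<^sup>2 / 2 + a)"
      by (simp add: field_simps)
    then have "exp (-a) * ((1 + exp (2*a)) / 2) \<le> exp (-a) * exp (a\<^sup>2 / 2 + a)"
      by (rule mult_left_mono) simp
    moreover have "cosh a = exp (-a) * ((1 + exp (2*a)) / 2)"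
      by (simp add: cosh_field_def field_simps flip: exp_add)
    moreover have "exp (-a) * exp (a\<^sup>2 / 2 + a) = exp (a\<^sup>2 / 2)"
      by (simp flip: exp_add)
    ultimately show ?thesis
      by simp
  qed
  show ?thesis
    using nonneg[of a] nonneg[of "-a"] by (cases "a \<ge> 0") simp_all
qed

lemma power_div_fact_le_exp:
  fixes y :: real
  assumes "0 \<le> y"
  shows "y ^ k / fact k \<le> exp y"
proof -
  have "y ^ k / fact k \<le> (\<Sum>n\<le>k. y ^ n / fact n)"
    by (rule member_le_sum) (use assms in auto)
  also have "\<dots> \<le> exp y"
    using assms summable_exp_generic[of y]
    by (auto simp: exp_def divide_inverse ac_simps intro!: sum_le_suminf)
  finally show ?thesis .
qed

lemma exp_minus_twice_le_one_minus:
  fixes x :: real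
  assumes "0 \<le> x" "x \<le> 1/2"
  shows "exp (-2 * x) \<le> 1 - x"
proof -
  have "x * x \<le> x * (1/2)"
    by (rule mult_left_mono) (use assms in auto)
  then have "-2 * x \<le> - x - 2 * x\<^sup>2"
    by (simp add: power2_eq_square)
  also have "\<dots> \<le> ln (1 - x)"
    by (rule ln_one_minus_pos_lower_bound) (use assms in auto)
  finally show ?thesis
    using assms by (simp add: ln_ge_iff)
qed

lemma power6_mult_exp_le:
  fixes z :: real
  assumes "64 \<le> z"
  shows "z ^ 6 * exp (- (3 * z / 4)) \<le> 1 / 200"
proof -
  define c :: real where "c = (3/4) ^ 16 / fact 16"
  have "200 \<le> 64 ^ 10 * c"
    by (simp add: c_def fact_numeral power_divide)
  also have "\<dots> \<le> z ^ 10 * c"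
    using assms by (intro mult_right_mono power_mono) (auto simp: c_def)
  finally have "200 * z ^ 6 \<le> z ^ 10 * c * z ^ 6"
    using assms by (intro mult_right_mono) auto
  also have "\<dots> = (3 * z / 4) ^ 16 / fact 16"
    by (simp add: c_def power_mult_distrib power_divide flip: power_add)
  also have "\<dots> \<le> exp (3 * z / 4)"
    by (rule power_div_fact_le_exp) (use assms in auto)
  finally show ?thesis
    by (simp add: exp_minus field_simps)
qed

lemma power3_mult_exp_le:
  fixes z :: real
  assumes "64 \<le> z"
  shows "z ^ 3 * exp (- (3 * z / 4)) \<le> 1 / 10 ^ 6"
proof -
  have "64 ^ 3 * (z ^ 3 * exp (- (3 * z / 4))) \<le> z ^ 3 * (z ^ 3 * exp (- (3 * z / 4)))"
    using assms by (intro mult_right_mono power_mono) auto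
  also have "\<dots> \<le> 1 / 200"
    using power6_mult_exp_le[OF assms] by (simp flip: power_add mult.assoc)
  finally show ?thesis
    by simp
qed

lemma square_mult_exp_le:
  fixes D :: real
  assumes "10 ^ 12 \<le> D"
  shows "D\<^sup>2 * exp (- (D / 500)) \<le> 1 / 100"
proof -
  have "100 * D\<^sup>2 \<le> (D / 500) ^ 3 / fact 3"
    using assms by (simp add: fact_numeral power2_eq_square power3_eq_cube field_simps)
  also have "\<dots> \<le> exp (D / 500)"
    by (rule power_div_fact_le_exp) (use assms in auto)
  finally show ?thesis
    by (simp add: exp_minus field_simps)
qed

section \<open>Counting coin assignments\<close>

text \<open>\<open>bool_cube V\<close> is the set of assignments of a coin to each index in \<open>V\<close> (with \<open>False\<close>
  elsewhere); probabilities of events are represented by their cardinalities in it.\<close>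

definition bool_cube :: "nat set \<Rightarrow> (nat \<Rightarrow> bool) set" where
  "bool_cube V = {f. \<forall>v. v \<notin> V \<longrightarrow> \<not> f v}"

definition determined_by :: "nat set \<Rightarrow> nat set \<Rightarrow> (nat \<Rightarrow> bool) set \<Rightarrow> bool" where
  "determined_by V S A \<longleftrightarrow> A \<subseteq> bool_cube V \<and>
     (\<forall>f\<in>bool_cube V. \<forall>g\<in>bool_cube V. (\<forall>v\<in>S. f v = g v) \<longrightarrow> (f \<in> A \<longleftrightarrow> g \<in> A))"

lemma determined_byD:
  assumes "determined_by V S A" "f \<in> bool_cube V" "g \<in> bool_cube V" "\<And>v. v \<in> S \<Longrightarrow> f v = g v"
  shows "f \<in> A \<longleftrightarrow> g \<in> A"
  using assms unfolding determined_by_def by blast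

lemma finite_bool_cube:
  assumes "finite V"
  shows "finite (bool_cube V)"
proof -
  have "bool_cube V = (\<lambda>S v. v \<in> S) ` Pow V"
  proof
    show "bool_cube V \<subseteq> (\<lambda>S v. v \<in> S) ` Pow V"
    proof
      fix f assume "f \<in> bool_cube V"
      then have "{v. f v} \<in> Pow V"
        by (auto simp: bool_cube_def)
      then show "f \<in> (\<lambda>S v. v \<in> S) ` Pow V"
        by (rule rev_image_eqI) simp
    qed
  qed (auto simp: bool_cube_def)
  then show ?thesis
    using assms by simp
qed

lemma bij_betw_bool_cube_merge:
  assumes "S \<subseteq> V"
  shows "bij_betw (\<lambda>(g, h) v. if v \<in> S then g v else h v)
           (bool_cube S \<times> bool_cube (V - S)) (bool_cube V)"
  by (rule bij_betwI[where g = "\<lambda>f. (\<lambda>v. v \<in> S \<and> f v, \<lambda>v. v \<notin> S \<and> f v)"])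
    (use assms in \<open>auto simp: bool_cube_def fun_eq_iff\<close>)

lemma card_eq_card_preimage:
  assumes "bij_betw f P Q" "Z \<subseteq> Q"
  shows "card Z = card {p \<in> P. f p \<in> Z}"
proof -
  have "bij_betw f {p \<in> P. f p \<in> Z} Z"
    by (rule bij_betw_subset[OF assms(1)]) (use assms in \<open>auto simp: bij_betw_def\<close>)
  then show ?thesis
    by (simp add: bij_betw_same_card)
qed

text \<open>Splitting an assignment into its restrictions to \<open>S\<close> and to \<open>V - S\<close> turns \<open>A\<close> into a
  cylinder over a set of assignments on \<open>S\<close> and \<open>B\<close> into one over \<open>V - S\<close>.\<close>

lemma card_Int_determined_by_disjoint:
  assumes "S \<subseteq> V" "R \<subseteq> V" "S \<inter> R = {}"
    and A: "determined_by V S A" and B: "determined_by V R B"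
  shows "card (A \<inter> B) * card (bool_cube V) = card A * card B"
proof -
  define W where "W = V - S"
  define merge where "merge = (\<lambda>(g, h) v. if v \<in> S then g v else h v :: bool)"
  define P where "P = bool_cube S \<times> bool_cube W"
  have bij: "bij_betw merge P (bool_cube V)"
    unfolding merge_def P_def W_def by (rule bij_betw_bool_cube_merge[OF assms(1)])
  define AS where "AS = {g \<in> bool_cube S. merge (g, \<lambda>_. False) \<in> A}"
  define BW where "BW = {h \<in> bool_cube W. merge (\<lambda>_. False, h) \<in> B}"
  have merge_in: "merge p \<in> bool_cube V" if "p \<in> P" for p
    using bij that by (auto simp: bij_betw_def)
  have empty_in: "(\<lambda>_. False) \<in> bool_cube U" for U
    by (simp add: bool_cube_def)
  have in_A: "merge (g, h) \<in> A \<longleftrightarrow> g \<in> AS" and in_B: "merge (g, h) \<in> B \<longleftrightarrow> h \<in> BW"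
    if "g \<in> bool_cube S" "h \<in> bool_cube W" for g h
  proof -
    have P: "(g, h) \<in> P" "(g, \<lambda>_. False) \<in> P" "((\<lambda>_. False), h) \<in> P"
      using that empty_in by (auto simp: P_def)
    have "merge (g, h) \<in> A \<longleftrightarrow> merge (g, \<lambda>_. False) \<in> A"
      by (rule determined_byD[OF A merge_in[OF P(1)] merge_in[OF P(2)]]) (simp add: merge_def)
    then show "merge (g, h) \<in> A \<longleftrightarrow> g \<in> AS"
      using that by (simp add: AS_def)
    have "merge (g, h) \<in> B \<longleftrightarrow> merge (\<lambda>_. False, h) \<in> B"
      by (rule determined_byD[OF B merge_in[OF P(1)] merge_in[OF P(3)]])
        (use assms(3) in \<open>auto simp: merge_def\<close>)
    then show "merge (g, h) \<in> B \<longleftrightarrow> h \<in> BW"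
      using that by (simp add: BW_def)
  qed
  have "A \<subseteq> bool_cube V" "B \<subseteq> bool_cube V"
    using A B by (auto simp: determined_by_def)
  moreover have "{p \<in> P. merge p \<in> A} = AS \<times> bool_cube W"
    using in_A by (auto simp: P_def AS_def)
  moreover have "{p \<in> P. merge p \<in> B} = bool_cube S \<times> BW"
    using in_B by (auto simp: P_def BW_def)
  moreover have "{p \<in> P. merge p \<in> A \<inter> B} = AS \<times> BW"
    using in_A in_B by (auto simp: P_def AS_def BW_def)
  moreover have "{p \<in> P. merge p \<in> bool_cube V} = bool_cube S \<times> bool_cube W"
    using merge_in by (auto simp: P_def)
  ultimately show ?thesis
    using card_eq_card_preimage[OF bij, of A] card_eq_card_preimage[OF bij, of B]
      card_eq_card_preimage[OF bij, of "A \<inter> B"] card_eq_card_preimage[OF bij, of "bool_cube V"]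
    by (simp add: card_cartesian_product le_infI1)
qed

lemma determined_by_Diff_Union:
  assumes "\<And>j. j \<in> T \<Longrightarrow> determined_by V (S j) (A j)"
  shows "determined_by V (\<Union>j\<in>T. S j) (bool_cube V - \<Union>(A ` T))"
  unfolding determined_by_def
proof (intro conjI ballI impI)
  fix f g assume f: "f \<in> bool_cube V" and g: "g \<in> bool_cube V"
    and fg: "\<forall>v\<in>(\<Union>j\<in>T. S j). f v = g v"
  have "f \<in> A j \<longleftrightarrow> g \<in> A j" if "j \<in> T" for j
    by (rule determined_byD[OF assms[OF that] f g]) (use fg that in blast)
  then show "f \<in> bool_cube V - \<Union>(A ` T) \<longleftrightarrow> g \<in> bool_cube V - \<Union>(A ` T)"
    using f g by blast
qed blast

section \<open>A Hoeffding bound\<close>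

lemma sum_bool_cube_exp_eq_cosh:
  fixes F :: "(nat \<Rightarrow> bool) \<Rightarrow> real" and t :: "bool \<Rightarrow> real"
  assumes "k \<in> V" and F: "\<And>f. F (f(k := \<not> f k)) = F f" and t: "\<And>b. t (\<not> b) = - t b"
  shows "(\<Sum>f\<in>bool_cube V. F f * exp (t (f k))) = (\<Sum>f\<in>bool_cube V. F f * cosh (t (f k)))"
proof -
  define flip where "flip f = f(k := \<not> f k)" for f :: "nat \<Rightarrow> bool"
  have flip_in: "flip f \<in> bool_cube V" if "f \<in> bool_cube V" for f
    using that assms(1) by (auto simp: bool_cube_def flip_def)
  let ?S = "\<lambda>s. \<Sum>f\<in>bool_cube V. F f * exp (s * t (f k))"
  \<comment> \<open>flipping coin \<open>k\<close> is an involution of the cube which changes the sign of \<open>t (f k)\<close>\<close>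
  have "?S 1 = (\<Sum>f\<in>bool_cube V. F (flip f) * exp (t (flip f k)))"
    by (rule sum.reindex_bij_witness[where i = flip and j = flip])
      (simp_all add: flip_in, simp_all add: flip_def)
  also have "\<dots> = ?S (-1)"
    by (simp add: flip_def F t)
  finally have "?S 1 = (?S 1 + ?S (-1)) / 2"
    by simp
  also have "\<dots> = (\<Sum>f\<in>bool_cube V. F f * cosh (t (f k)))"
    by (simp add: cosh_field_def sum.distrib[symmetric] sum_divide_distrib[symmetric] ring_distribs)
  finally show ?thesis
    by simp
qed

lemma sum_exp_signed_sum_le:
  fixes g :: "nat \<Rightarrow> bool \<Rightarrow> real" and l :: real
  assumes "finite V" "K \<subseteq> V"
    and g: "\<And>k b. k \<in> K \<Longrightarrow> g k (\<not> b) = - g k b \<and> \<bar>g k b\<bar> \<le> 1"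
  shows "(\<Sum>f\<in>bool_cube V. exp (l * (\<Sum>k\<in>K. g k (f k))))
           \<le> exp (l\<^sup>2 / 2) ^ card K * card (bool_cube V)"
proof -
  have "finite K"
    using assms(1,2) by (rule finite_subset[rotated])
  then show ?thesis
    using assms(2) g
  proof (induction K rule: finite_induct)
    case empty
    then show ?case by simp
  next
    case (insert k K)
    define F where "F f = exp (l * (\<Sum>j\<in>K. g j (f j)))" for f
    have F_flip: "F (f(k := \<not> f k)) = F f" for f
    proof -
      have "(\<Sum>j\<in>K. g j ((f(k := \<not> f k)) j)) = (\<Sum>j\<in>K. g j (f j))"
        using insert.hyps by (intro sum.cong) auto
      then show ?thesis
        by (simp add: F_def)
    qed
    have "(\<Sum>f\<in>bool_cube V. exp (l * (\<Sum>j\<in>insert k K. g j (f j))))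
        = (\<Sum>f\<in>bool_cube V. F f * exp (l * g k (f k)))"
      using insert.hyps by (simp add: F_def distrib_left exp_add mult.commute)
    also have "\<dots> = (\<Sum>f\<in>bool_cube V. F f * cosh (l * g k (f k)))"
      using insert.prems
      by (intro sum_bool_cube_exp_eq_cosh[where t = "\<lambda>b. l * g k b"] F_flip) auto
    also have "\<dots> \<le> (\<Sum>f\<in>bool_cube V. F f * exp (l\<^sup>2 / 2))"
    proof (intro sum_mono mult_left_mono)
      fix f
      have "(l * g k (f k))\<^sup>2 \<le> l\<^sup>2"
        using insert.prems abs_square_le_1[of "g k (f k)"] mult_left_mono[of _ 1 "l\<^sup>2"]
        by (simp add: power_mult_distrib)
      then have "exp ((l * g k (f k))\<^sup>2 / 2) \<le> exp (l\<^sup>2 / 2)"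
        by simp
      then show "cosh (l * g k (f k)) \<le> exp (l\<^sup>2 / 2)"
        using cosh_le_exp_half_square by (rule order_trans[rotated])
    qed (simp add: F_def)
    also have "\<dots> = exp (l\<^sup>2 / 2) * (\<Sum>f\<in>bool_cube V. F f)"
      by (simp add: sum_distrib_right mult.commute)
    also have "\<dots> \<le> exp (l\<^sup>2 / 2) * (exp (l\<^sup>2 / 2) ^ card K * card (bool_cube V))"
      using insert by (intro mult_left_mono) (auto simp: F_def)
    also have "\<dots> = exp (l\<^sup>2 / 2) ^ card (insert k K) * card (bool_cube V)"
      using insert.hyps by simp
    finally show ?case .
  qed
qed

lemma card_signed_sum_gt_le:
  fixes g :: "nat \<Rightarrow> bool \<Rightarrow> real" and \<tau> M :: real
  assumes "finite V" "K \<subseteq> V"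
    and g: "\<And>k b. k \<in> K \<Longrightarrow> g k (\<not> b) = - g k b \<and> \<bar>g k b\<bar> \<le> 1"
    and "0 \<le> \<tau>" "card K \<le> M" "0 < M"
  shows "card {f \<in> bool_cube V. \<tau> < (\<Sum>k\<in>K. g k (f k))}
           \<le> exp (- \<tau>\<^sup>2 / (2 * M)) * card (bool_cube V)"
proof -
  define l where "l = \<tau> / M"
  define E where "E = {f \<in> bool_cube V. \<tau> < (\<Sum>k\<in>K. g k (f k))}"
  have "0 \<le> l"
    using assms by (simp add: l_def)
  have "card E * exp (l * \<tau>) = (\<Sum>f\<in>E. exp (l * \<tau>))"
    by simp
  also have "\<dots> \<le> (\<Sum>f\<in>E. exp (l * (\<Sum>k\<in>K. g k (f k))))"
    using \<open>0 \<le> l\<close> by (intro sum_mono) (auto simp: E_def intro!: mult_left_mono)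
  also have "\<dots> \<le> (\<Sum>f\<in>bool_cube V. exp (l * (\<Sum>k\<in>K. g k (f k))))"
    by (rule sum_mono2) (auto simp: E_def finite_bool_cube assms(1))
  also have "\<dots> \<le> exp (l\<^sup>2 / 2) ^ card K * card (bool_cube V)"
    by (rule sum_exp_signed_sum_le) (use assms in auto)
  also have "exp (l\<^sup>2 / 2) ^ card K \<le> exp (l\<^sup>2 / 2 * M)"
    using assms(5) by (simp add: exp_of_nat_mult[symmetric] mult.commute mult_right_mono)
  finally have "card E * exp (l * \<tau>) \<le> exp (l\<^sup>2 / 2 * M) * card (bool_cube V)"
    by (simp add: mult_right_mono)
  then have "card E \<le> exp (l\<^sup>2 / 2 * M) * card (bool_cube V) / exp (l * \<tau>)"
    by (simp add: field_simps)
  also have "\<dots> = exp (l\<^sup>2 / 2 * M - l * \<tau>) * card (bool_cube V)"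
    by (simp add: exp_diff)
  also have "l\<^sup>2 / 2 * M - l * \<tau> = - \<tau>\<^sup>2 / (2 * M)"
    using assms(6) by (simp add: l_def field_simps power2_eq_square)
  finally show ?thesis
    by (simp add: E_def)
qed

lemma card_abs_signed_sum_gt_le:
  fixes g :: "nat \<Rightarrow> bool \<Rightarrow> real" and \<tau> M :: real
  assumes "finite V" "K \<subseteq> V"
    and g: "\<And>k b. k \<in> K \<Longrightarrow> g k (\<not> b) = - g k b \<and> \<bar>g k b\<bar> \<le> 1"
    and "0 \<le> \<tau>" "card K \<le> M" "0 < M"
  shows "card {f \<in> bool_cube V. \<tau> < \<bar>\<Sum>k\<in>K. g k (f k)\<bar>}
           \<le> 2 * exp (- \<tau>\<^sup>2 / (2 * M)) * card (bool_cube V)"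
proof -
  let ?E = "\<lambda>g. {f \<in> bool_cube V. \<tau> < (\<Sum>k\<in>K. g k (f k))}"
  have "{f \<in> bool_cube V. \<tau> < \<bar>\<Sum>k\<in>K. g k (f k)\<bar>} = ?E g \<union> ?E (\<lambda>k b. - g k b)"
    by (auto simp: sum_negf abs_less_iff)
  then have "card {f \<in> bool_cube V. \<tau> < \<bar>\<Sum>k\<in>K. g k (f k)\<bar>} \<le> card (?E g) + card (?E (\<lambda>k b. - g k b))"
    by (simp only: card_Un_le)
  then have "real (card {f \<in> bool_cube V. \<tau> < \<bar>\<Sum>k\<in>K. g k (f k)\<bar>})
      \<le> real (card (?E g)) + real (card (?E (\<lambda>k b. - g k b)))"
    by linarith
  also have "\<dots> \<le> exp (- \<tau>\<^sup>2 / (2 * M)) * card (bool_cube V) + exp (- \<tau>\<^sup>2 / (2 * M)) * card (bool_cube V)"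
    by (intro add_mono card_signed_sum_gt_le) (use assms in auto)
  finally show ?thesis
    by (simp add: algebra_simps)
qed

section \<open>The Local Lemma\<close>

text \<open>Independence of
  \<open>A i\<close> is only required from intersections of complements of events outside \<open>G i\<close>, which is
  all the proof uses.\<close>

locale local_lemma =
  fixes \<Omega> :: "'a set" and I :: "'i set" and A :: "'i \<Rightarrow> 'a set"
    and G :: "'i \<Rightarrow> 'i set" and x :: "'i \<Rightarrow> real"
  assumes finite_\<Omega>: "finite \<Omega>" and finite_I: "finite I"
    and G_subset: "\<And>i. i \<in> I \<Longrightarrow> G i \<subseteq> I"
    and x_bounds: "\<And>i. i \<in> I \<Longrightarrow> 0 \<le> x i \<and> x i < 1"
    and independent: "\<And>i T. i \<in> I \<Longrightarrow> T \<subseteq> I \<Longrightarrow> i \<notin> T \<Longrightarrow> T \<inter> G i = {} \<Longrightarrow>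
      card (A i \<inter> (\<Omega> - \<Union>(A ` T))) * card \<Omega> = card (A i) * card (\<Omega> - \<Union>(A ` T))"
    and card_A_le: "\<And>i. i \<in> I \<Longrightarrow> card (A i) \<le> x i * (\<Prod>j\<in>G i. 1 - x j) * card \<Omega>"
begin

definition avoid :: "'i set \<Rightarrow> 'a set" where
  "avoid T = \<Omega> - \<Union>(A ` T)"

lemma avoid_subset: "avoid T \<subseteq> \<Omega>"
  by (auto simp: avoid_def)

lemma card_avoid_insert_ge:
  assumes "card (A j \<inter> avoid T) \<le> x j * card (avoid T)"
  shows "(1 - x j) * card (avoid T) \<le> card (avoid (insert j T))"
proof -
  have "finite (avoid T)"
    using finite_\<Omega> avoid_subset by (rule finite_subset[rotated])
  then have "card (avoid T) = card (A j \<inter> avoid T) + card (avoid T - A j)"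
    by (metis Int_commute card_Int_Diff)
  moreover have "avoid (insert j T) = avoid T - A j"
    by (auto simp: avoid_def)
  ultimately show ?thesis
    using assms by (simp add: algebra_simps)
qed

lemma prod_card_avoid_le:
  assumes "finite U" "U \<subseteq> I"
    and step: "\<And>j W. j \<in> U \<Longrightarrow> W \<subseteq> U - {j} \<Longrightarrow>
      card (A j \<inter> avoid (T \<union> W)) \<le> x j * card (avoid (T \<union> W))"
  shows "(\<Prod>j\<in>U. 1 - x j) * card (avoid T) \<le> card (avoid (T \<union> U))"
  using assms
proof (induction U rule: finite_induct)
  case empty
  then show ?case by simp
next
  case (insert j U)
  have IH: "(\<Prod>j\<in>U. 1 - x j) * card (avoid T) \<le> card (avoid (T \<union> U))"
  proof (rule insert.IH)
    show "U \<subseteq> I"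
      using insert.prems by simp
    fix j' W assume "j' \<in> U" "W \<subseteq> U - {j'}"
    then show "card (A j' \<inter> avoid (T \<union> W)) \<le> x j' * card (avoid (T \<union> W))"
      by (intro insert.prems(2)) auto
  qed
  have "(\<Prod>j\<in>insert j U. 1 - x j) * card (avoid T) = (1 - x j) * ((\<Prod>j\<in>U. 1 - x j) * card (avoid T))"
    using insert.hyps by simp
  also have "\<dots> \<le> (1 - x j) * card (avoid (T \<union> U))"
    using IH x_bounds[of j] insert.prems by (intro mult_left_mono) auto
  also have "\<dots> \<le> card (avoid (insert j (T \<union> U)))"
    by (rule card_avoid_insert_ge, rule insert.prems(2)) (use insert.hyps in auto)
  finally show ?case
    by simp
qed

lemma card_Int_avoid_le_of_independent:
  assumes "i \<in> I" "T \<subseteq> I" "i \<notin> T" "T \<inter> G i = {}"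
  shows "card (A i \<inter> avoid T) \<le> x i * (\<Prod>j\<in>G i. 1 - x j) * card (avoid T)"
proof (cases "\<Omega> = {}")
  case True
  then have "avoid T = {}"
    using avoid_subset by blast
  then show ?thesis
    by simp
next
  case False
  then have \<Omega>: "0 < real (card \<Omega>)"
    using finite_\<Omega> by (simp add: card_gt_0_iff)
  have "real (card (A i \<inter> avoid T)) = card (A i) * card (avoid T) / card \<Omega>"
    using independent[OF assms] \<Omega> by (simp add: avoid_def field_simps flip: of_nat_mult)
  also have "\<dots> \<le> x i * (\<Prod>j\<in>G i. 1 - x j) * card \<Omega> * card (avoid T) / card \<Omega>"
    using mult_right_mono[OF card_A_le[OF assms(1)], of "card (avoid T)"]
    by (intro divide_right_mono) auto
  also have "\<dots> = x i * (\<Prod>j\<in>G i. 1 - x j) * card (avoid T)"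
    using \<Omega> by simp
  finally show ?thesis .
qed

lemma prod_one_minus_le_subset:
  assumes "i \<in> I" "S \<subseteq> G i"
  shows "(\<Prod>j\<in>G i. 1 - x j) \<le> (\<Prod>j\<in>S. 1 - x j)"
proof -
  have G: "finite (G i)" "\<forall>j\<in>G i. 0 \<le> 1 - x j \<and> 1 - x j \<le> 1"
    using G_subset[OF assms(1)] finite_I x_bounds by (auto intro: finite_subset) force+
  then have "(\<Prod>j\<in>G i. 1 - x j) = (\<Prod>j\<in>G i - S. 1 - x j) * (\<Prod>j\<in>S. 1 - x j)"
    using assms(2) by (simp add: prod.subset_diff)
  also have "\<dots> \<le> 1 * (\<Prod>j\<in>S. 1 - x j)"
    using G assms(2) by (intro mult_right_mono prod_le_1 prod_nonneg) blast+
  finally show ?thesis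
    by simp
qed

lemma card_Int_avoid_le:
  assumes "T \<subseteq> I" "i \<in> I" "i \<notin> T"
  shows "card (A i \<inter> avoid T) \<le> x i * card (avoid T)"
  using assms
proof (induction "card T" arbitrary: T i rule: less_induct)
  case less
  define T1 where "T1 = T \<inter> G i"
  define T2 where "T2 = T - G i"
  have "finite T"
    using less.prems finite_I finite_subset by blast
  \<comment> \<open>the events of \<open>T1\<close> are removed one at a time, each conditioned on fewer than \<open>card T\<close> others\<close>
  have chain: "(\<Prod>j\<in>T1. 1 - x j) * card (avoid T2) \<le> card (avoid (T2 \<union> T1))"
  proof (rule prod_card_avoid_le)
    show "finite T1" "T1 \<subseteq> I"
      using \<open>finite T\<close> less.prems by (auto simp: T1_def)
    fix j W assume j: "j \<in> T1" and W: "W \<subseteq> T1 - {j}"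
    have "T2 \<union> W \<subseteq> T - {j}"
      using j W by (auto simp: T1_def T2_def)
    then have "card (T2 \<union> W) < card T"
      using j \<open>finite T\<close> by (metis Int_iff T1_def card_Diff1_less card_mono finite_Diff le_less_trans)
    then show "card (A j \<inter> avoid (T2 \<union> W)) \<le> x j * card (avoid (T2 \<union> W))"
      using less.prems j W by (intro less.hyps) (auto simp: T1_def T2_def)
  qed
  have "card (A i \<inter> avoid T) \<le> card (A i \<inter> avoid T2)"
    using finite_\<Omega> by (intro card_mono) (auto simp: avoid_def T2_def)
  also have "real (card (A i \<inter> avoid T2)) \<le> x i * (\<Prod>j\<in>G i. 1 - x j) * card (avoid T2)"
    using less.prems by (intro card_Int_avoid_le_of_independent) (auto simp: T2_def)
  also have "\<dots> \<le> x i * ((\<Prod>j\<in>T1. 1 - x j) * card (avoid T2))"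
    using prod_one_minus_le_subset[OF less.prems(2), of T1] x_bounds[OF less.prems(2)]
    by (simp add: T1_def mult.assoc mult_left_mono mult_right_mono)
  also have "\<dots> \<le> x i * card (avoid T)"
  proof -
    have "T2 \<union> T1 = T"
      by (auto simp: T1_def T2_def)
    then show ?thesis
      using chain x_bounds[OF less.prems(2)] by (intro mult_left_mono) auto
  qed
  finally show ?case
    by simp
qed

theorem prod_card_le_card_avoid:
  "(\<Prod>i\<in>I. 1 - x i) * card \<Omega> \<le> card (avoid I)"
  using prod_card_avoid_le[OF finite_I order_refl, of "{}"] card_Int_avoid_le
  by (auto simp: avoid_def)

corollary avoid_all:
  assumes "\<Omega> \<noteq> {}"
  shows "\<exists>\<omega>\<in>\<Omega>. \<forall>i\<in>I. \<omega> \<notin> A i"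
proof -
  have "0 < (\<Prod>i\<in>I. 1 - x i) * card \<Omega>"
    using assms finite_\<Omega> x_bounds by (intro mult_pos_pos prod_pos) (auto simp: card_gt_0_iff)
  then have "avoid I \<noteq> {}"
    using prod_card_le_card_avoid by fastforce
  then show ?thesis
    by (auto simp: avoid_def)
qed

end

section \<open>Pairing the vertices of \<open>X\<close>\<close>

lemma abs_sum_parity_sign_le_1:
  assumes "J \<subseteq> {2 * k, Suc (2 * k)}"
  shows "\<bar>\<Sum>i\<in>J. if even i then 1 else -1 :: real\<bar> \<le> 1"
proof -
  have "J = {} \<or> J = {2 * k} \<or> J = {Suc (2 * k)} \<or> J = {2 * k, Suc (2 * k)}"
    using assms by blast
  then show ?thesis
    by auto
qed

lemma abs_sum_alternating_le_1:
  fixes f :: "nat \<Rightarrow> bool"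
  shows "\<bar>\<Sum>i<n. (if even i then 1 else -1) * (if f (i div 2) then 1 else -1 :: real)\<bar> \<le> 1"
proof -
  let ?a = "\<lambda>i. (if even i then 1 else -1) * (if f (i div 2) then 1 else -1 :: real)"
  have pairs: "(\<Sum>i<2 * j. ?a i) = 0" for j
    by (induction j) (simp_all add: lessThan_Suc)
  show ?thesis
  proof (cases "even n")
    case True
    then show ?thesis
      using pairs by (auto elim: evenE)
  next
    case False
    then obtain j where "n = Suc (2 * j)"
      by (auto elim: oddE)
    then show ?thesis
      using pairs[of j] by simp
  qed
qed

text \<open>Enumerate \<open>X\<close> as \<open>e 0, e 1, \<dots>\<close> and pair \<open>e (2 * k)\<close> with \<open>e (2 * k + 1)\<close>.  A coin
  \<open>f k\<close> per pair decides which member of pair \<open>k\<close> gets spin \<open>+1\<close>: the total spin of \<open>X\<close>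
  is then at most 1 in absolute value, while spins in different pairs stay independent.\<close>

locale pairing =
  fixes X :: "nat set" and m :: nat and e :: "nat \<Rightarrow> nat"
  assumes bij_e: "bij_betw e {0..<m} X"
begin

definition pos :: "nat \<Rightarrow> nat" where
  "pos u = inv_into {0..<m} e u"

definition pair :: "nat \<Rightarrow> nat" where
  "pair u = pos u div 2"

definition side :: "nat \<Rightarrow> real" where
  "side u = (if even (pos u) then 1 else -1)"

definition spin :: "(nat \<Rightarrow> bool) \<Rightarrow> nat \<Rightarrow> real" where
  "spin f u = side u * (if f (pair u) then 1 else -1)"

definition deviates :: "nat set \<Rightarrow> real \<Rightarrow> (nat \<Rightarrow> bool) set" where
  "deviates N \<tau> = {f \<in> bool_cube {0..<m}. \<tau> < \<bar>\<Sum>u\<in>N. spin f u\<bar>}"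

definition plus_side :: "(nat \<Rightarrow> bool) \<Rightarrow> nat set" where
  "plus_side f = {u \<in> X. spin f u = 1}"

definition minus_side :: "(nat \<Rightarrow> bool) \<Rightarrow> nat set" where
  "minus_side f = {u \<in> X. spin f u = -1}"

lemma finite_X: "finite X"
  using bij_e bij_betw_finite by blast

lemma pos_less: "u \<in> X \<Longrightarrow> pos u < m"
  unfolding pos_def using bij_e by (metis atLeastLessThan_iff bij_betw_def inv_into_into)

lemma pos_e: "i < m \<Longrightarrow> pos (e i) = i"
  unfolding pos_def using bij_e by (metis atLeastLessThan_iff bij_betw_def inv_into_f_f zero_le)

lemma inj_on_pos: "inj_on pos X"
  unfolding pos_def using bij_e by (metis bij_betw_def inj_on_inv_into order_refl)

lemma pair_less: "u \<in> X \<Longrightarrow> pair u < m"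
  using pos_less pair_def by fastforce

lemma abs_sum_side_same_pair_le_1:
  assumes "N \<subseteq> X"
  shows "\<bar>\<Sum>u\<in>{u \<in> N. pair u = k}. side u\<bar> \<le> 1"
proof -
  have "inj_on pos {u \<in> N. pair u = k}"
    using assms by (auto intro: inj_on_subset[OF inj_on_pos])
  then have "(\<Sum>u\<in>{u \<in> N. pair u = k}. side u)
      = (\<Sum>i\<in>pos ` {u \<in> N. pair u = k}. if even i then 1 else -1)"
    by (simp add: sum.reindex side_def)
  moreover have "pos ` {u \<in> N. pair u = k} \<subseteq> {2 * k, Suc (2 * k)}"
    by (auto simp: pair_def)
  ultimately show ?thesis
    using abs_sum_parity_sign_le_1 by simp
qed

lemma sum_spin_eq_sum_pairs:
  assumes "N \<subseteq> X"
  shows "(\<Sum>u\<in>N. spin f u)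
           = (\<Sum>k\<in>pair ` N. (\<Sum>u\<in>{u \<in> N. pair u = k}. side u) * (if f k then 1 else -1))"
proof -
  have "finite N"
    using assms finite_X finite_subset by blast
  then have "(\<Sum>u\<in>N. spin f u) = (\<Sum>k\<in>pair ` N. \<Sum>u\<in>{u \<in> N. pair u = k}. spin f u)"
    by (rule sum.image_gen)
  also have "\<dots> = (\<Sum>k\<in>pair ` N. (\<Sum>u\<in>{u \<in> N. pair u = k}. side u) * (if f k then 1 else -1))"
    by (intro sum.cong) (auto simp: spin_def sum_distrib_right)
  finally show ?thesis .
qed

lemma card_deviates_le:
  fixes \<tau> M :: real
  assumes "N \<subseteq> X" "0 \<le> \<tau>" "card N \<le> M" "0 < M"
  shows "card (deviates N \<tau>) \<le> 2 * exp (- \<tau>\<^sup>2 / (2 * M)) * card (bool_cube {0..<m})"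
proof -
  define g where "g k b = (\<Sum>u\<in>{u \<in> N. pair u = k}. side u) * (if b then 1 else -1 :: real)" for k b
  have "finite N"
    using assms finite_X finite_subset by blast
  have "deviates N \<tau> = {f \<in> bool_cube {0..<m}. \<tau> < \<bar>\<Sum>k\<in>pair ` N. g k (f k)\<bar>}"
    unfolding deviates_def g_def using sum_spin_eq_sum_pairs[OF assms(1)] by simp
  also have "real (card \<dots>) \<le> 2 * exp (- \<tau>\<^sup>2 / (2 * M)) * card (bool_cube {0..<m})"
  proof (rule card_abs_signed_sum_gt_le)
    show "pair ` N \<subseteq> {0..<m}"
      using assms pair_less by auto
    show "g k (\<not> b) = - g k b \<and> \<bar>g k b\<bar> \<le> 1" for k b
      using abs_sum_side_same_pair_le_1[OF assms(1)] by (auto simp: g_def abs_mult)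
    have "card (pair ` N) \<le> card N"
      using \<open>finite N\<close> by (rule card_image_le)
    then show "card (pair ` N) \<le> M"
      using assms by linarith
  qed (use assms in auto)
  finally show ?thesis .
qed

lemma determined_by_deviates:
  "determined_by {0..<m} (pair ` N) (deviates N \<tau>)"
  unfolding determined_by_def
proof (intro conjI ballI impI)
  fix f g :: "nat \<Rightarrow> bool"
  assume "f \<in> bool_cube {0..<m}" "g \<in> bool_cube {0..<m}" "\<forall>v\<in>pair ` N. f v = g v"
  moreover from this have "(\<Sum>u\<in>N. spin f u) = (\<Sum>u\<in>N. spin g u)"
    by (intro sum.cong) (auto simp: spin_def)
  ultimately show "f \<in> deviates N \<tau> \<longleftrightarrow> g \<in> deviates N \<tau>"
    by (simp add: deviates_def)
qed (auto simp: deviates_def)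

lemma abs_sum_spin_le_1:
  fixes f :: "nat \<Rightarrow> bool"
  shows "\<bar>\<Sum>u\<in>X. spin f u\<bar> \<le> 1"
proof -
  have "(\<Sum>u\<in>X. spin f u) = (\<Sum>i\<in>{0..<m}. spin f (e i))"
    by (rule sum.reindex_bij_betw[OF bij_e, symmetric])
  also have "\<dots> = (\<Sum>i<m. (if even i then 1 else -1) * (if f (i div 2) then 1 else -1))"
    by (auto simp: spin_def side_def pair_def pos_e atLeast0LessThan intro: sum.cong)
  finally show ?thesis
    using abs_sum_alternating_le_1 by simp
qed

lemma card_shared_pair_le:
  assumes "N \<subseteq> X"
  shows "card {u \<in> X. pair u \<in> pair ` N} \<le> 2 * card N"
proof -
  have "finite N"
    using assms finite_X finite_subset by blast
  have card_pair: "card {u \<in> X. pair u = k} \<le> 2" for k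
  proof -
    have "card {u \<in> X. pair u = k} \<le> card {2 * k, Suc (2 * k)}"
      by (rule card_inj_on_le[where f = pos]) (auto intro: inj_on_subset[OF inj_on_pos] simp: pair_def)
    then show ?thesis
      by (simp add: card_insert_if)
  qed
  have "{u \<in> X. pair u \<in> pair ` N} = (\<Union>k\<in>pair ` N. {u \<in> X. pair u = k})"
    by blast
  then have "card {u \<in> X. pair u \<in> pair ` N} = card (\<Union>k\<in>pair ` N. {u \<in> X. pair u = k})"
    by (simp only:)
  also have "\<dots> \<le> (\<Sum>k\<in>pair ` N. card {u \<in> X. pair u = k})"
    by (rule card_UN_le) (use \<open>finite N\<close> in simp)
  also have "\<dots> \<le> (\<Sum>k\<in>pair ` N. 2)"
    by (rule sum_mono) (rule card_pair)
  also have "\<dots> \<le> 2 * card N"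
    using card_image_le[OF \<open>finite N\<close>, of pair] by simp
  finally show ?thesis .
qed

lemma card_le_of_shared_pair:
  fixes \<beta> :: real
  assumes "N \<subseteq> X" and R: "\<And>u. u \<in> X \<Longrightarrow> finite (R u) \<and> card (R u) \<le> \<beta>" and "0 \<le> \<beta>"
    and cover: "\<And>j. j \<in> S \<Longrightarrow> \<exists>u\<in>X. pair u \<in> pair ` N \<and> j \<in> R u"
  shows "card S \<le> 2 * card N * \<beta>"
proof -
  define Q where "Q = {u \<in> X. pair u \<in> pair ` N}"
  have Q: "finite Q" "Q \<subseteq> X"
    using finite_X by (auto simp: Q_def)
  have "S \<subseteq> (\<Union>u\<in>Q. R u)"
    using cover unfolding Q_def by blast
  moreover have "finite (\<Union>u\<in>Q. R u)"
    using Q R by auto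
  ultimately have "card S \<le> card (\<Union>u\<in>Q. R u)"
    by (rule card_mono[rotated])
  also have "\<dots> \<le> (\<Sum>u\<in>Q. card (R u))"
    by (rule card_UN_le[OF Q(1)])
  finally have "real (card S) \<le> (\<Sum>u\<in>Q. real (card (R u)))"
    by (simp flip: of_nat_sum)
  also have "\<dots> \<le> card Q * \<beta>"
    using sum_mono[of Q "\<lambda>u. real (card (R u))" "\<lambda>_. \<beta>"] Q R by auto
  also have "\<dots> \<le> 2 * card N * \<beta>"
    using card_shared_pair_le[OF assms(1)] \<open>0 \<le> \<beta>\<close> by (intro mult_right_mono) (auto simp: Q_def)
  finally show ?thesis .
qed

lemma spin_cases: "spin f u = 1 \<or> spin f u = -1"
  by (auto simp: spin_def side_def)

lemma plus_minus_side:
  "plus_side f \<union> minus_side f = X" "plus_side f \<inter> minus_side f = {}"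
  using spin_cases by (auto simp: plus_side_def minus_side_def)

lemma sum_spin_eq_card_diff:
  assumes "N \<subseteq> X"
  shows "(\<Sum>u\<in>N. spin f u) = real (card (N \<inter> plus_side f)) - real (card (N \<inter> minus_side f))"
proof -
  have "finite N"
    using assms finite_X finite_subset by blast
  have "N = (N \<inter> plus_side f) \<union> (N \<inter> minus_side f)" "(N \<inter> plus_side f) \<inter> (N \<inter> minus_side f) = {}"
    using assms plus_minus_side[of f] by blast+
  then have "(\<Sum>u\<in>N. spin f u) = (\<Sum>u\<in>N \<inter> plus_side f. spin f u) + (\<Sum>u\<in>N \<inter> minus_side f. spin f u)"
    using \<open>finite N\<close> by (simp add: sum.union_disjoint[symmetric])
  also have "\<dots> = real (card (N \<inter> plus_side f)) - real (card (N \<inter> minus_side f))"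
    by (simp add: plus_side_def minus_side_def)
  finally show ?thesis .
qed

lemma card_Int_plus_side_add_minus_side:
  assumes "N \<subseteq> X"
  shows "card (N \<inter> plus_side f) + card (N \<inter> minus_side f) = card N"
proof -
  have "finite N"
    using assms finite_X finite_subset by blast
  have "N = (N \<inter> plus_side f) \<union> (N \<inter> minus_side f)" "(N \<inter> plus_side f) \<inter> (N \<inter> minus_side f) = {}"
    using assms plus_minus_side[of f] by blast+
  then show ?thesis
    using \<open>finite N\<close> by (simp add: card_Un_disjoint[symmetric])
qed

lemma card_Int_sides_bounds:
  fixes \<tau> :: real
  assumes "N \<subseteq> X" "\<bar>\<Sum>u\<in>N. spin f u\<bar> \<le> \<tau>"
  shows "(card N - \<tau>) / 2 \<le> card (N \<inter> plus_side f) \<and> card (N \<inter> plus_side f) \<le> (card N + \<tau>) / 2"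
    and "(card N - \<tau>) / 2 \<le> card (N \<inter> minus_side f) \<and> card (N \<inter> minus_side f) \<le> (card N + \<tau>) / 2"
proof -
  have "real (card (N \<inter> plus_side f)) + real (card (N \<inter> minus_side f)) = real (card N)"
    using card_Int_plus_side_add_minus_side[OF assms(1)] by (metis of_nat_add)
  moreover have "\<bar>real (card (N \<inter> plus_side f)) - real (card (N \<inter> minus_side f))\<bar> \<le> \<tau>"
    using assms(2) sum_spin_eq_card_diff[OF assms(1), of f] by simp
  ultimately show "(card N - \<tau>) / 2 \<le> card (N \<inter> plus_side f) \<and> card (N \<inter> plus_side f) \<le> (card N + \<tau>) / 2"
    and "(card N - \<tau>) / 2 \<le> card (N \<inter> minus_side f) \<and> card (N \<inter> minus_side f) \<le> (card N + \<tau>) / 2"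
    by (simp_all add: abs_le_iff field_simps)
qed

lemma card_sides_balanced:
  fixes f :: "nat \<Rightarrow> bool"
  shows "\<bar>int (card (plus_side f)) - int (card (minus_side f))\<bar> \<le> 1"
proof -
  have "X \<inter> plus_side f = plus_side f" "X \<inter> minus_side f = minus_side f"
    using plus_minus_side[of f] by blast+
  then show ?thesis
    using sum_spin_eq_card_diff[OF order_refl, of f] abs_sum_spin_le_1[of f] by simp
qed

end

section \<open>The random bipartition\<close>

lemma weight_X_sufficient:
  fixes q D :: real
  assumes "64 \<le> q" "q ^ 3 \<le> D" "10 ^ 12 \<le> D"
  shows "2 * exp (- (3 * q / 4)) \<le> 4 * exp (- (3 * q / 4)) *
           exp (- 2 * (4 * exp (- (3 * q / 4)) * (8 * q ^ 6) + exp (- (D / 500)) * (4 * q ^ 3 * D)))"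
proof -
  have "q ^ 3 * D \<le> D\<^sup>2"
    using assms by (simp add: power2_eq_square mult_right_mono)
  then have "q ^ 3 * D * exp (- (D / 500)) \<le> D\<^sup>2 * exp (- (D / 500))"
    by (rule mult_right_mono) simp
  then have "q ^ 3 * D * exp (- (D / 500)) \<le> 1 / 100"
    using square_mult_exp_le[OF assms(3)] by linarith
  moreover have "- 2 * (4 * exp (- (3 * q / 4)) * (8 * q ^ 6) + exp (- (D / 500)) * (4 * q ^ 3 * D))
      = - (64 * (q ^ 6 * exp (- (3 * q / 4))) + 8 * (q ^ 3 * D * exp (- (D / 500))))"
    by (simp add: algebra_simps)
  ultimately have "1 / 2 \<le> 1 + (- 2 * (4 * exp (- (3 * q / 4)) * (8 * q ^ 6) + exp (- (D / 500)) * (4 * q ^ 3 * D)))"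
    using power6_mult_exp_le[OF assms(1)] by linarith
  also have "\<dots> \<le> exp (- 2 * (4 * exp (- (3 * q / 4)) * (8 * q ^ 6) + exp (- (D / 500)) * (4 * q ^ 3 * D)))"
    by (rule exp_ge_add_one_self)
  finally have "4 * exp (- (3 * q / 4)) * (1 / 2) \<le> 4 * exp (- (3 * q / 4)) *
      exp (- 2 * (4 * exp (- (3 * q / 4)) * (8 * q ^ 6) + exp (- (D / 500)) * (4 * q ^ 3 * D)))"
    by (rule mult_left_mono) simp
  then show ?thesis
    by simp
qed

lemma weight_Y_sufficient:
  fixes q D :: real
  assumes "64 \<le> q" "10 ^ 12 \<le> D"
  shows "2 * exp (- (D / 242)) \<le> exp (- (D / 500)) *
           exp (- 2 * (4 * exp (- (3 * q / 4)) * (4 * D * q ^ 3) + exp (- (D / 500)) * (2 * D\<^sup>2)))"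
proof -
  define t where "t = D * (q ^ 3 * exp (- (3 * q / 4)))"
  define s where "s = D\<^sup>2 * exp (- (D / 500))"
  have "t \<le> D * (1 / 10 ^ 6)"
    using power3_mult_exp_le[OF assms(1)] assms(2) unfolding t_def by (intro mult_left_mono) auto
  moreover have "s \<le> 1 / 100"
    using square_mult_exp_le[OF assms(2)] by (simp add: s_def)
  moreover have "1000 \<le> D"
    using assms(2) by simp
  ultimately have "1 - D / 242 \<le> - (D / 500) + - (32 * t + 4 * s)"
    by simp
  also have "- (32 * t + 4 * s)
      = - 2 * (4 * exp (- (3 * q / 4)) * (4 * D * q ^ 3) + exp (- (D / 500)) * (2 * D\<^sup>2))"
    by (simp add: t_def s_def algebra_simps)
  finally have exponent:
    "1 - D / 242 \<le> - (D / 500) + - 2 * (4 * exp (- (3 * q / 4)) * (4 * D * q ^ 3) + exp (- (D / 500)) * (2 * D\<^sup>2))" .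
  have "2 * exp (- (D / 242)) \<le> exp 1 * exp (- (D / 242))"
    using exp_ge_add_one_self[of 1] by (intro mult_right_mono) auto
  also have "\<dots> = exp (1 - D / 242)"
    by (simp flip: exp_add)
  also have "\<dots> \<le> exp (- (D / 500) + - 2 * (4 * exp (- (3 * q / 4)) * (4 * D * q ^ 3) + exp (- (D / 500)) * (2 * D\<^sup>2)))"
    using exponent by simp
  also have "\<dots> = exp (- (D / 500)) * exp (- 2 * (4 * exp (- (3 * q / 4)) * (4 * D * q ^ 3) + exp (- (D / 500)) * (2 * D\<^sup>2)))"
    by (rule exp_add)
  finally show ?thesis .
qed

lemma exp_le_prod_one_minus:
  fixes w :: "nat \<Rightarrow> real"
  assumes "finite S" "\<And>j. j \<in> S \<Longrightarrow> 0 \<le> w j \<and> w j \<le> 1 / 2"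
  shows "exp (- 2 * (\<Sum>j\<in>S. w j)) \<le> (\<Prod>j\<in>S. 1 - w j)"
proof -
  have "exp (- 2 * (\<Sum>j\<in>S. w j)) = (\<Prod>j\<in>S. exp (- 2 * w j))"
    using assms(1) by (simp add: sum_distrib_left exp_sum)
  also have "\<dots> \<le> (\<Prod>j\<in>S. 1 - w j)"
    using assms(2) exp_minus_twice_le_one_minus by (intro prod_mono) auto
  finally show ?thesis .
qed

lemma bip_sub_commute: "bip_sub E A B = bip_sub E B A"
  by (auto simp: bip_sub_def fun_eq_iff)

lemma nbhd_bip_sub:
  assumes "x \<in> A" "x \<notin> B"
  shows "nbhd (bip_sub E A B) x = nbhd E x \<inter> B"
  using assms by (auto simp: nbhd_def bip_sub_def)

text \<open>\<open>D\<close> and \<open>q\<close> stand for \<open>d\<close> and \<open>d'\<^sup>1\<^sup>/\<^sup>3\<close>.  The bad event of \<open>x \<in> X\<close> is a violation of (L1)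
  at \<open>x\<close>; the bad event of \<open>y \<in> Y\<close> is an imbalance of \<open>N\<^sub>H(y)\<close> so large that one side
  receives fewer than \<open>D / 5\<close> of its vertices.\<close>

locale splitting = pairing +
  fixes Y :: "nat set" and H GX :: "nat \<Rightarrow> nat \<Rightarrow> bool" and D q :: real
  assumes D: "10 ^ 12 \<le> D" and q: "64 \<le> q" and q_cube_le: "q ^ 3 \<le> D"
    and disjoint: "X \<inter> Y = {}" and finite_Y: "finite Y"
    and H_sym: "\<And>u v. H u v \<Longrightarrow> H v u"
    and H_between: "\<And>u v. H u v \<Longrightarrow> (u \<in> X \<and> v \<in> Y) \<or> (u \<in> Y \<and> v \<in> X)"
    and deg_H: "\<And>v. v \<in> X \<union> Y \<Longrightarrow> D / 2 - D / 10 ^ 4 \<le> deg H v \<and> deg H v \<le> D / 2 + D / 10 ^ 4"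
    and GX: "simple_graph_on X GX"
    and deg_GX: "\<And>x. x \<in> X \<Longrightarrow> 3 / 8 * q ^ 3 \<le> deg GX x \<and> deg GX x \<le> 13 / 8 * q ^ 3"
begin

definition nbr :: "nat \<Rightarrow> nat set" where
  "nbr i = (if i \<in> X then nbhd GX i else nbhd H i)"

definition threshold :: "nat \<Rightarrow> real" where
  "threshold i = (if i \<in> X then 2 / q * deg GX i else deg H i - 2 * D / 5)"

definition bad :: "nat \<Rightarrow> (nat \<Rightarrow> bool) set" where
  "bad i = deviates (nbr i) (threshold i)"

definition dependents :: "nat \<Rightarrow> nat set" where
  "dependents i = {j \<in> X \<union> Y. j \<noteq> i \<and> pair ` nbr j \<inter> pair ` nbr i \<noteq> {}}"

definition weight :: "nat \<Rightarrow> real" where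
  "weight i = (if i \<in> X then 4 * exp (- (3 * q / 4)) else exp (- (D / 500)))"

lemma GX_sym: "GX u v \<Longrightarrow> GX v u" and GX_in: "GX u v \<Longrightarrow> u \<in> X \<and> v \<in> X"
  using GX by (auto simp: simple_graph_on_def)

lemma nbhd_GX_subset: "nbhd GX u \<subseteq> X"
  using GX_in by (auto simp: nbhd_def)

lemma nbhd_H_subset: "nbhd H u \<subseteq> X \<union> Y"
  using H_between by (auto simp: nbhd_def)

lemma nbr_subset: "i \<in> X \<union> Y \<Longrightarrow> nbr i \<subseteq> X"
  using nbhd_GX_subset H_between disjoint by (auto simp: nbr_def nbhd_def)

lemma card_nbr: "card (nbr i) = (if i \<in> X then deg GX i else deg H i)"
  by (simp add: nbr_def deg_def)

lemma deg_H_le_D: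
  assumes "v \<in> X \<union> Y"
  shows "deg H v \<le> D"
  using deg_H[OF assms] D by simp

lemma weight_bounds: "0 \<le> weight i \<and> weight i \<le> 1 / 2"
proof -
  have "exp (- (3 * q / 4)) \<le> q ^ 6 * exp (- (3 * q / 4))"
    using q by (intro mult_le_cancel_right1[THEN iffD2]) (simp add: one_le_power)
  moreover have "exp (- (D / 500)) \<le> D\<^sup>2 * exp (- (D / 500))"
    using D by (intro mult_le_cancel_right1[THEN iffD2]) (simp add: one_le_power)
  ultimately have "exp (- (3 * q / 4)) \<le> 1 / 200" "exp (- (D / 500)) \<le> 1 / 100"
    using power6_mult_exp_le[OF q] square_mult_exp_le[OF D] by linarith+
  then show ?thesis
    by (simp add: weight_def)
qed

lemma bad_independent:
  assumes "i \<in> X \<union> Y" "T \<subseteq> X \<union> Y" "i \<notin> T" "T \<inter> dependents i = {}"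
  shows "card (bad i \<inter> (bool_cube {0..<m} - \<Union>(bad ` T))) * card (bool_cube {0..<m})
           = card (bad i) * card (bool_cube {0..<m} - \<Union>(bad ` T))"
proof (rule card_Int_determined_by_disjoint)
  show "pair ` nbr i \<subseteq> {0..<m}" "(\<Union>j\<in>T. pair ` nbr j) \<subseteq> {0..<m}"
    using assms nbr_subset pair_less by fastforce+
  show "pair ` nbr i \<inter> (\<Union>j\<in>T. pair ` nbr j) = {}"
    using assms by (auto simp: dependents_def)
  show "determined_by {0..<m} (pair ` nbr i) (bad i)"
    unfolding bad_def by (rule determined_by_deviates)
  show "determined_by {0..<m} (\<Union>j\<in>T. pair ` nbr j) (bool_cube {0..<m} - \<Union>(bad ` T))"
    unfolding bad_def by (intro determined_by_Diff_Union determined_by_deviates)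
qed

lemma card_dependents_X_le:
  assumes "i \<in> X \<union> Y"
  shows "card (dependents i \<inter> X) \<le> 2 * card (nbr i) * (2 * q ^ 3)"
proof (rule card_le_of_shared_pair[OF nbr_subset[OF assms]])
  show "finite (nbhd GX u) \<and> card (nbhd GX u) \<le> 2 * q ^ 3" if "u \<in> X" for u
    using deg_GX[OF that] finite_subset[OF nbhd_GX_subset finite_X] q by (simp add: deg_def)
  fix j assume "j \<in> dependents i \<inter> X"
  then obtain u where u: "u \<in> nbr j" "pair u \<in> pair ` nbr i" and "j \<in> X"
    by (auto simp: dependents_def)
  then have "u \<in> X" "j \<in> nbhd GX u"
    using GX_in GX_sym by (auto simp: nbr_def nbhd_def)
  with u show "\<exists>u\<in>X. pair u \<in> pair ` nbr i \<and> j \<in> nbhd GX u"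
    by blast
qed (use q in simp)

lemma card_dependents_Y_le:
  assumes "i \<in> X \<union> Y"
  shows "card (dependents i \<inter> Y) \<le> 2 * card (nbr i) * D"
proof (rule card_le_of_shared_pair[OF nbr_subset[OF assms]])
  show "finite (nbhd H u) \<and> card (nbhd H u) \<le> D" if "u \<in> X" for u
    using deg_H_le_D[of u] that finite_subset[OF nbhd_H_subset] finite_X finite_Y by (simp add: deg_def)
  fix j assume "j \<in> dependents i \<inter> Y"
  then obtain u where u: "u \<in> nbr j" "pair u \<in> pair ` nbr i" and "j \<in> Y"
    by (auto simp: dependents_def)
  moreover from \<open>j \<in> Y\<close> have "j \<notin> X"
    using disjoint by blast
  ultimately have "H j u"
    by (simp add: nbr_def nbhd_def)
  then have "u \<in> X" "j \<in> nbhd H u"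
    using \<open>j \<notin> X\<close> H_between H_sym by (auto simp: nbhd_def)
  with u show "\<exists>u\<in>X. pair u \<in> pair ` nbr i \<and> j \<in> nbhd H u"
    by blast
qed (use D in simp)

lemma exp_le_prod_one_minus_weight:
  fixes a b :: real
  assumes "i \<in> X \<union> Y" "card (dependents i \<inter> X) \<le> a" "card (dependents i \<inter> Y) \<le> b"
  shows "exp (- 2 * (4 * exp (- (3 * q / 4)) * a + exp (- (D / 500)) * b))
           \<le> (\<Prod>j\<in>dependents i. 1 - weight j)"
proof -
  have fin: "finite (dependents i)"
    using finite_X finite_Y by (simp add: dependents_def)
  have "dependents i \<inter> - X = dependents i \<inter> Y"
    using disjoint by (auto simp: dependents_def)
  then have "(\<Sum>j\<in>dependents i. weight j)
      = 4 * exp (- (3 * q / 4)) * card (dependents i \<inter> X) + exp (- (D / 500)) * card (dependents i \<inter> Y)"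
    using fin by (simp add: weight_def sum.If_cases Int_def)
  also have "\<dots> \<le> 4 * exp (- (3 * q / 4)) * a + exp (- (D / 500)) * b"
    using assms by (intro add_mono mult_left_mono) auto
  finally have "exp (- 2 * (4 * exp (- (3 * q / 4)) * a + exp (- (D / 500)) * b))
      \<le> exp (- 2 * (\<Sum>j\<in>dependents i. weight j))"
    by simp
  also have "\<dots> \<le> (\<Prod>j\<in>dependents i. 1 - weight j)"
    using fin weight_bounds by (rule exp_le_prod_one_minus)
  finally show ?thesis .
qed

lemma exp_le_prod_dependents_X:
  assumes "x \<in> X"
  shows "exp (- 2 * (4 * exp (- (3 * q / 4)) * (8 * q ^ 6) + exp (- (D / 500)) * (4 * q ^ 3 * D)))
           \<le> (\<Prod>j\<in>dependents x. 1 - weight j)"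
proof (rule exp_le_prod_one_minus_weight)
  have deg: "deg GX x \<le> 2 * q ^ 3"
    using deg_GX[OF assms] q by auto
  have "card (dependents x \<inter> X) \<le> 2 * deg GX x * (2 * q ^ 3)"
    using card_dependents_X_le[of x] assms by (simp add: card_nbr)
  also have "\<dots> \<le> 2 * (2 * q ^ 3) * (2 * q ^ 3)"
    using deg q by (intro mult_right_mono) auto
  finally show "card (dependents x \<inter> X) \<le> 8 * q ^ 6"
    by (simp add: power_mult_distrib flip: power_add)
  have "card (dependents x \<inter> Y) \<le> 2 * deg GX x * D"
    using card_dependents_Y_le[of x] assms by (simp add: card_nbr)
  also have "\<dots> \<le> 2 * (2 * q ^ 3) * D"
    using deg D by (intro mult_right_mono) auto
  finally show "card (dependents x \<inter> Y) \<le> 4 * q ^ 3 * D"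
    by simp
qed (use assms in simp)

lemma exp_le_prod_dependents_Y:
  assumes "y \<in> Y"
  shows "exp (- 2 * (4 * exp (- (3 * q / 4)) * (4 * D * q ^ 3) + exp (- (D / 500)) * (2 * D\<^sup>2)))
           \<le> (\<Prod>j\<in>dependents y. 1 - weight j)"
proof (rule exp_le_prod_one_minus_weight)
  have "y \<notin> X" "deg H y \<le> D"
    using assms disjoint deg_H_le_D[of y] by auto
  have "card (dependents y \<inter> X) \<le> 2 * deg H y * (2 * q ^ 3)"
    using card_dependents_X_le[of y] assms \<open>y \<notin> X\<close> by (simp add: card_nbr)
  also have "\<dots> \<le> 2 * D * (2 * q ^ 3)"
    using \<open>deg H y \<le> D\<close> q by (intro mult_right_mono) auto
  finally show "card (dependents y \<inter> X) \<le> 4 * D * q ^ 3"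
    by simp
  have "card (dependents y \<inter> Y) \<le> 2 * deg H y * D"
    using card_dependents_Y_le[of y] assms \<open>y \<notin> X\<close> by (simp add: card_nbr)
  also have "\<dots> \<le> 2 * D * D"
    using \<open>deg H y \<le> D\<close> D by (intro mult_right_mono) auto
  finally show "card (dependents y \<inter> Y) \<le> 2 * D\<^sup>2"
    by (simp add: power2_eq_square)
qed (use assms in simp)

lemma card_bad_X_le:
  assumes "x \<in> X"
  shows "card (bad x) \<le> 2 * exp (- (3 * q / 4)) * card (bool_cube {0..<m})"
proof -
  define M where "M = real (deg GX x)"
  have "3 / 8 * q ^ 3 \<le> M"
    using deg_GX[OF assms] by (simp add: M_def)
  moreover have "0 < q"
    using q by simp
  ultimately have "0 < M"
    using zero_less_power[of q 3] by linarith
  have threshold: "threshold x = 2 / q * M" and card: "card (nbr x) = M"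
    using assms by (simp_all add: threshold_def card_nbr M_def)
  have "card (bad x) \<le> 2 * exp (- (2 / q * M)\<^sup>2 / (2 * M)) * card (bool_cube {0..<m})"
    unfolding bad_def threshold
    by (rule card_deviates_le) (use assms nbr_subset card \<open>0 < q\<close> \<open>0 < M\<close> in auto)
  also have "\<dots> \<le> 2 * exp (- (3 * q / 4)) * card (bool_cube {0..<m})"
  proof -
    have "(2 / q * M)\<^sup>2 / (2 * M) = 2 * M / q\<^sup>2"
      using \<open>0 < q\<close> \<open>0 < M\<close> by (simp add: power2_eq_square field_simps)
    moreover have "3 * q / 4 \<le> 2 * M / q\<^sup>2"
      using \<open>3 / 8 * q ^ 3 \<le> M\<close> \<open>0 < q\<close> by (simp add: field_simps power2_eq_square power3_eq_cube)
    ultimately show ?thesis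
      by (intro mult_right_mono mult_left_mono) auto
  qed
  finally show ?thesis .
qed

lemma card_bad_Y_le:
  assumes "y \<in> Y"
  shows "card (bad y) \<le> 2 * exp (- (D / 242)) * card (bool_cube {0..<m})"
proof -
  have "y \<notin> X"
    using assms disjoint by blast
  have deg: "D / 2 - D / 10 ^ 4 \<le> deg H y" "deg H y \<le> D"
    using deg_H[of y] deg_H_le_D[of y] assms by auto
  have "D / 11 \<le> threshold y"
    using deg(1) D \<open>y \<notin> X\<close> by (simp add: threshold_def)
  have "card (bad y) \<le> 2 * exp (- (threshold y)\<^sup>2 / (2 * D)) * card (bool_cube {0..<m})"
    unfolding bad_def using assms deg \<open>D / 11 \<le> threshold y\<close> D \<open>y \<notin> X\<close>
    by (intro card_deviates_le nbr_subset) (auto simp: card_nbr)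
  also have "\<dots> \<le> 2 * exp (- (D / 242)) * card (bool_cube {0..<m})"
  proof -
    have "(D / 11)\<^sup>2 \<le> (threshold y)\<^sup>2"
      using \<open>D / 11 \<le> threshold y\<close> D by (intro power_mono) auto
    then have "D / 242 \<le> (threshold y)\<^sup>2 / (2 * D)"
      using D by (simp add: field_simps power2_eq_square)
    then show ?thesis
      by (intro mult_right_mono mult_left_mono) auto
  qed
  finally show ?thesis .
qed

lemma card_bad_le:
  assumes "i \<in> X \<union> Y"
  shows "card (bad i) \<le> weight i * (\<Prod>j\<in>dependents i. 1 - weight j) * card (bool_cube {0..<m})"
proof (cases "i \<in> X")
  case True
  have "card (bad i) \<le> 2 * exp (- (3 * q / 4)) * card (bool_cube {0..<m})"
    using True by (rule card_bad_X_le)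
  also have "\<dots> \<le> weight i * (\<Prod>j\<in>dependents i. 1 - weight j) * card (bool_cube {0..<m})"
  proof (rule mult_right_mono)
    have "2 * exp (- (3 * q / 4)) \<le> weight i * exp (- 2 * (4 * exp (- (3 * q / 4)) * (8 * q ^ 6)
        + exp (- (D / 500)) * (4 * q ^ 3 * D)))"
      using weight_X_sufficient[OF q q_cube_le D] True by (simp add: weight_def)
    also have "\<dots> \<le> weight i * (\<Prod>j\<in>dependents i. 1 - weight j)"
      by (rule mult_left_mono[OF exp_le_prod_dependents_X[OF True]]) (use weight_bounds[of i] in simp)
    finally show "2 * exp (- (3 * q / 4)) \<le> weight i * (\<Prod>j\<in>dependents i. 1 - weight j)" .
  qed simp
  finally show ?thesis .
next
  case False
  then have "i \<in> Y"
    using assms by blast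
  have "card (bad i) \<le> 2 * exp (- (D / 242)) * card (bool_cube {0..<m})"
    using \<open>i \<in> Y\<close> by (rule card_bad_Y_le)
  also have "\<dots> \<le> weight i * (\<Prod>j\<in>dependents i. 1 - weight j) * card (bool_cube {0..<m})"
  proof (rule mult_right_mono)
    have "2 * exp (- (D / 242)) \<le> weight i * exp (- 2 * (4 * exp (- (3 * q / 4)) * (4 * D * q ^ 3)
        + exp (- (D / 500)) * (2 * D\<^sup>2)))"
      using weight_Y_sufficient[OF q D] False by (simp add: weight_def)
    also have "\<dots> \<le> weight i * (\<Prod>j\<in>dependents i. 1 - weight j)"
      by (rule mult_left_mono[OF exp_le_prod_dependents_Y[OF \<open>i \<in> Y\<close>]]) (use weight_bounds[of i] in simp)
    finally show "2 * exp (- (D / 242)) \<le> weight i * (\<Prod>j\<in>dependents i. 1 - weight j)" .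
  qed simp
  finally show ?thesis .
qed

lemma exists_good_coins: "\<exists>f\<in>bool_cube {0..<m}. \<forall>i\<in>X \<union> Y. f \<notin> bad i"
proof -
  interpret local_lemma "bool_cube {0..<m}" "X \<union> Y" bad dependents weight
  proof
    show "finite (bool_cube {0..<m})"
      by (simp add: finite_bool_cube)
    show "finite (X \<union> Y)"
      using finite_X finite_Y by simp
    show "dependents i \<subseteq> X \<union> Y" for i
      by (auto simp: dependents_def)
    show "0 \<le> weight i \<and> weight i < 1" for i
      using weight_bounds[of i] by simp
    show "card (bad i \<inter> (bool_cube {0..<m} - \<Union>(bad ` T))) * card (bool_cube {0..<m})
        = card (bad i) * card (bool_cube {0..<m} - \<Union>(bad ` T))"
      if "i \<in> X \<union> Y" "T \<subseteq> X \<union> Y" "i \<notin> T" "T \<inter> dependents i = {}" for i T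
      using that by (rule bad_independent)
    show "card (bad i) \<le> weight i * (\<Prod>j\<in>dependents i. 1 - weight j) * card (bool_cube {0..<m})"
      if "i \<in> X \<union> Y" for i
      using that by (rule card_bad_le)
  qed
  show ?thesis
    by (rule avoid_all) (auto simp: bool_cube_def)
qed

lemma deg_bip_sub_sides_bounds:
  fixes \<tau> :: real
  assumes "x \<in> X" "\<bar>\<Sum>u\<in>nbhd GX x. spin f u\<bar> \<le> \<tau>"
  shows "(deg GX x - \<tau>) / 2 \<le> deg (bip_sub GX (plus_side f) (minus_side f)) x
    \<and> deg (bip_sub GX (plus_side f) (minus_side f)) x \<le> (deg GX x + \<tau>) / 2"
proof (cases "x \<in> plus_side f")
  case True
  then have "x \<notin> minus_side f"
    using plus_minus_side(2) by blast
  then show ?thesis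
    using card_Int_sides_bounds(2)[OF nbhd_GX_subset assms(2)] True
    by (simp add: deg_def nbhd_bip_sub)
next
  case False
  then have "x \<in> minus_side f"
    using plus_minus_side(1) assms(1) by blast
  then show ?thesis
    using card_Int_sides_bounds(1)[OF nbhd_GX_subset assms(2)] False
    by (simp add: deg_def nbhd_bip_sub bip_sub_commute[of GX "plus_side f"])
qed

theorem exists_good_split:
  "\<exists>X' X''. X' \<union> X'' = X \<and> X' \<inter> X'' = {} \<and>
     (\<forall>x \<in> X. (1 - 2 / q) * (deg GX x / 2) \<le> deg (bip_sub GX X' X'') x
               \<and> deg (bip_sub GX X' X'') x \<le> (1 + 2 / q) * (deg GX x / 2)) \<and>
     d_good (D / 5) Y H X' X''"
proof -
  obtain f where f: "\<forall>i\<in>X \<union> Y. f \<notin> bad i" "f \<in> bool_cube {0..<m}"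
    using exists_good_coins by blast
  have good: "\<bar>\<Sum>u\<in>nbr i. spin f u\<bar> \<le> threshold i" if "i \<in> X \<union> Y" for i
    using f that by (auto simp: bad_def deviates_def not_less)
  have L1: "(1 - 2 / q) * (deg GX x / 2) \<le> deg (bip_sub GX (plus_side f) (minus_side f)) x
      \<and> deg (bip_sub GX (plus_side f) (minus_side f)) x \<le> (1 + 2 / q) * (deg GX x / 2)"
    if "x \<in> X" for x
    using deg_bip_sub_sides_bounds[OF that, of f "2 / q * deg GX x"] good[of x] that
    by (simp add: nbr_def threshold_def algebra_simps)
  have L2: "D / 5 \<le> card (nbhd H y \<inter> plus_side f) \<and> D / 5 \<le> card (nbhd H y \<inter> minus_side f)"
    if "y \<in> Y" for y
  proof -
    have "y \<notin> X"
      using that disjoint by blast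
    moreover from this have "nbhd H y \<subseteq> X"
      using nbr_subset[of y] that by (simp add: nbr_def)
    ultimately show ?thesis
      using card_Int_sides_bounds[of "nbhd H y" f "deg H y - 2 * D / 5"] good[of y] that
      by (simp add: nbr_def threshold_def deg_def)
  qed
  show ?thesis
    using plus_minus_side[of f] L1 L2 card_sides_balanced[of f]
    by (intro exI[of _ "plus_side f"] exI[of _ "minus_side f"]) (auto simp: d_good_def)
qed

end

lemma powr_one_third_cube:
  fixes x :: real
  assumes "0 \<le> x"
  shows "(x powr (1 / 3)) ^ 3 = x"
proof (cases "x = 0")
  case False
  then have "(x powr (1 / 3)) ^ 3 = x powr (1 / 3 * 3)"
    using assms by (simp add: powr_powr flip: powr_realpow)
  then show ?thesis
    using assms False by simp
qed simp

lemma le_powr_one_third: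
  fixes c x :: real
  assumes "0 \<le> c" "c ^ 3 \<le> x"
  shows "c \<le> x powr (1 / 3)"
proof (rule ccontr)
  assume "\<not> c \<le> x powr (1 / 3)"
  then have "(x powr (1 / 3)) ^ 3 < c ^ 3"
    by (intro power_strict_mono) auto
  then show False
    using assms powr_one_third_cube[of x] by (smt (verit) zero_le_power)
qed

lemma powr_two_thirds_le:
  fixes D :: real
  assumes "10 ^ 12 \<le> D"
  shows "D powr (2 / 3) \<le> D / 10 ^ 4"
proof -
  have "10 ^ 4 \<le> D powr (1 / 3)"
    using assms by (intro le_powr_one_third) auto
  moreover have "D powr (2 / 3) = D / D powr (1 / 3)"
    using assms powr_diff[of D 1 "1 / 3"] by simp
  moreover have "D / D powr (1 / 3) \<le> D / 10 ^ 4"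
    by (rule divide_left_mono) (use assms \<open>10 ^ 4 \<le> D powr (1 / 3)\<close> in auto)
  ultimately show ?thesis
    by simp
qed

lemma splitting_of_hypotheses:
  fixes \<epsilon> :: real
  assumes "10 ^ 12 \<le> d" "\<epsilon> \<le> 5 / 8" "2 ^ 18 \<le> d'" "d' \<le> d"
    and bal: "balanced_bipartite_on n X Y H"
    and deg_H: "\<forall>v \<in> {1..n}. real d / 2 - real d powr (2/3) \<le> real (deg H v)
                   \<and> real (deg H v) \<le> real d / 2 + real d powr (2/3)"
    and "simple_graph_on X GX"
    and deg_GX: "\<forall>x \<in> X. (1 - \<epsilon>) * real d' \<le> real (deg GX x) \<and> real (deg GX x) \<le> (1 + \<epsilon>) * real d'"
    and "bij_betw e {0..<card X} X"
  shows "splitting X (card X) e Y H GX (real d) (real d' powr (1 / 3))"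
proof -
  have XY: "X \<union> Y = {1..n}" "X \<inter> Y = {}"
    and H: "\<forall>u v. H u v \<longrightarrow> H v u" "\<forall>u v. H u v \<longrightarrow> (u \<in> X \<and> v \<in> Y) \<or> (u \<in> Y \<and> v \<in> X)"
    using bal by (auto simp: balanced_bipartite_on_def simple_graph_on_def)
  have cube: "(real d' powr (1 / 3)) ^ 3 = real d'"
    by (simp add: powr_one_third_cube)
  have d_powr: "real d powr (2 / 3) \<le> real d / 10 ^ 4"
    using assms(1) powr_two_thirds_le[of "real d"] by simp
  have eps: "3 / 8 * real d' \<le> (1 - \<epsilon>) * real d'" "(1 + \<epsilon>) * real d' \<le> 13 / 8 * real d'"
    using assms(2) by (intro mult_right_mono; simp)+
  show ?thesis
  proof unfold_locales
    show "(real d' powr (1 / 3)) ^ 3 \<le> real d"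
      using cube assms(4) by simp
    show "64 \<le> real d' powr (1 / 3)"
      using assms(3) by (intro le_powr_one_third) auto
    show "finite Y"
      using XY(1) finite_subset[of Y "{1..n}"] by blast
    show "real d / 2 - real d / 10 ^ 4 \<le> deg H v \<and> deg H v \<le> real d / 2 + real d / 10 ^ 4"
      if "v \<in> X \<union> Y" for v
      using deg_H[rule_format, of v] d_powr that XY(1) by auto
    show "3 / 8 * (real d' powr (1 / 3)) ^ 3 \<le> deg GX x \<and> deg GX x \<le> 13 / 8 * (real d' powr (1 / 3)) ^ 3"
      if "x \<in> X" for x
      using deg_GX[rule_format, OF that] eps unfolding cube by linarith
  qed (use assms XY H in auto)
qed

theorem exists_good_bipartition:
  fixes \<epsilon> :: real
  assumes "10 ^ 12 \<le> d" "\<epsilon> \<le> 5 / 8" "2 ^ 18 \<le> d'" "d' \<le> d"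
    and bal: "balanced_bipartite_on n X Y H"
    and "\<forall>v \<in> {1..n}. real d / 2 - real d powr (2/3) \<le> real (deg H v)
           \<and> real (deg H v) \<le> real d / 2 + real d powr (2/3)"
    and "simple_graph_on X GX"
    and "\<forall>x \<in> X. (1 - \<epsilon>) * real d' \<le> real (deg GX x) \<and> real (deg GX x) \<le> (1 + \<epsilon>) * real d'"
  shows "\<exists>X' X''. X' \<union> X'' = X \<and> X' \<inter> X'' = {} \<and>
           (\<forall>x \<in> X. (1 - 2 / real d' powr (1/3)) * (real (deg GX x) / 2)
                       \<le> real (deg (bip_sub GX X' X'') x)
                     \<and> real (deg (bip_sub GX X' X'') x)
                       \<le> (1 + 2 / real d' powr (1/3)) * (real (deg GX x) / 2)) \<and>
           d_good (real d / 5) Y H X' X''"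
proof -
  have "X \<union> Y = {1..n}"
    using bal by (simp add: balanced_bipartite_on_def)
  then have "finite X"
    by (metis finite_Un finite_atLeastAtMost)
  then obtain e where e: "bij_betw e {0..<card X} X"
    using ex_bij_betw_nat_finite by blast
  interpret splitting X "card X" e Y H GX "real d" "real d' powr (1 / 3)"
    using splitting_of_hypotheses[OF assms e] .
  show ?thesis
    using exists_good_split by simp
qed

theorem lemma3p3:
  "\<exists>d0::nat. d0 > 0 \<and> (\<forall>d::nat. d \<ge> d0 \<longrightarrow>
     (\<forall>(\<epsilon>::real) (d'::nat) (n::nat) X Y H GX.
        0 < \<epsilon> \<longrightarrow> \<epsilon> \<le> 5/8 \<longrightarrow> 2^18 \<le> d' \<longrightarrow> d' \<le> d \<longrightarrow>
        n > 0 \<longrightarrow> even n \<longrightarrow>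
        balanced_bipartite_on n X Y H \<longrightarrow>
        (\<forall>v \<in> {1..n}. real d / 2 - real d powr (2/3) \<le> real (deg H v)
                        \<and> real (deg H v) \<le> real d / 2 + real d powr (2/3)) \<longrightarrow>
        simple_graph_on X GX \<longrightarrow>
        (\<forall>x \<in> X. (1 - \<epsilon>) * real d' \<le> real (deg GX x)
                  \<and> real (deg GX x) \<le> (1 + \<epsilon>) * real d') \<longrightarrow>
        (\<exists>X' X''. X' \<union> X'' = X \<and> X' \<inter> X'' = {} \<and>
           (\<forall>x \<in> X. (1 - 2 / real d' powr (1/3)) * (real (deg GX x) / 2)
                       \<le> real (deg (bip_sub GX X' X'') x)
                     \<and> real (deg (bip_sub GX X' X'') x)
                       \<le> (1 + 2 / real d' powr (1/3)) * (real (deg GX x) / 2)) \<and>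
           d_good (real d / 5) Y H X' X'')))"
  by (intro exI[of _ "10 ^ 12"] conjI allI impI exists_good_bipartition) auto

end
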